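(* For all $t,s_1,s_2\in\Lambda^\infty$: if $t\to^\infty_N s_1$ and $t\to^\infty_N s_2$, then $s_1\equiv s_2$.
   Context: Fix an infinite set $V$ of variables and a set $C$ of constants with $V\cap C=\emptyset$, containing a distinguished constant $\bot$. $\Lambda^\infty$ is the set of infinitary lambda-terms: all finite and infinite terms generated coinductively by $t ::= c\mid x\mid t\,t\mid\lambda x.t$, identified up to $\alpha$-equivalence; $s[t/x]$ is capture-avoiding substitution; $\equiv$ is identity; an atom is a variable or constant. $\to_\beta$ is the compatible closure of $\{((\lambda x.s)t,s[t/x])\}$, $\to^*_\beta$ its reflexive-transitive closure. A term is in head normal form (hnf) if it is $\lambda x_1\ldots x_m.\,a\,t_1\ldots t_n$ ($m,n\ge0$, $a$ an atom, $a\not\equiv\bot$); $t$ has a hnf if $t\to^*_\beta t'$ for some $t'$ in hnf. Weak head contraction $\to_w$ is the least relation with $(\lambda x.s)t\to_w s[t/x]$ and $s\to_w s'\Rightarrow st\to_w s't$; head contraction $\to_h$ is the least relation with $s\to_w s'\Rightarrow s\to_h s'$ and $s\to_h s'\Rightarrow\lambda x.s\to_h\lambda x.s'$; $\to^*_h$ is its reflexive-transitive closure. The relation $\to^\infty_N$ is the greatest relation such that whenever $t\to^\infty_N u$, either (i) $u\equiv\bot$ and $t$ has no hnf, or (ii) $u\equiv\lambda x_1\ldots x_n.\,a\,t_1'\ldots t_m'$ with $a$ an atom, $a\not\equiv\bot$, and there are $t_1,\ldots,t_m$ with $t\to^*_h\lambda x_1\ldots x_n.\,a\,t_1\ldots t_m$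 and $t_i\to^\infty_N t_i'$ for $i=1,\ldots,m$. *)

theory Defs
  imports "HOL-Library.BNF_Corec"
begin

text \<open>Infinitary lambda-terms modulo alpha-equivalence, represented with de Bruijn
indices as a codatatype (finite and infinite terms). Constants range over the
type 'c; the distinguished constant bottom is a parameter bt of the notions below.\<close>

codatatype 'c trm = Var nat | Con 'c | App "'c trm" "'c trm" | Lam "'c trm"

primcorec lift :: "nat \<Rightarrow> 'c trm \<Rightarrow> 'c trm" where
  "lift k t = (case t of
      Var n \<Rightarrow> Var (if n < k then n else Suc n)
    | Con c \<Rightarrow> Con c
    | App a b \<Rightarrow> App (lift k a) (lift k b)
    | Lam a \<Rightarrow> Lam (lift (Suc k) a))"

corec subst :: "nat \<Rightarrow> 'c trm \<Rightarrow> 'c trm \<Rightarrow> 'c trm" where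
  "subst k s t = (case t of
      Var n \<Rightarrow> (if n = k then s else Var (if n < k then n else n - 1))
    | Con c \<Rightarrow> Con c
    | App a b \<Rightarrow> App (subst k s a) (subst k s b)
    | Lam a \<Rightarrow> Lam (subst (Suc k) (lift 0 s) a))"

inductive beta :: "'c trm \<Rightarrow> 'c trm \<Rightarrow> bool" where
  beta_redex: "beta (App (Lam s) t) (subst 0 t s)"
| beta_appL: "beta s s' \<Longrightarrow> beta (App s t) (App s' t)"
| beta_appR: "beta t t' \<Longrightarrow> beta (App s t) (App s t')"
| beta_lam: "beta s s' \<Longrightarrow> beta (Lam s) (Lam s')"

inductive whead :: "'c trm \<Rightarrow> 'c trm \<Rightarrow> bool" where
  whead_redex: "whead (App (Lam s) t) (subst 0 t s)"
| whead_app: "whead s s' \<Longrightarrow> whead (App s t) (App s' t)"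

inductive head :: "'c trm \<Rightarrow> 'c trm \<Rightarrow> bool" where
  head_w: "whead s s' \<Longrightarrow> head s s'"
| head_lam: "head s s' \<Longrightarrow> head (Lam s) (Lam s')"

definition good_atom :: "'c \<Rightarrow> 'c trm \<Rightarrow> bool" where
  "good_atom bt a \<longleftrightarrow> (\<exists>n. a = Var n) \<or> (\<exists>c. a = Con c \<and> c \<noteq> bt)"

definition lams :: "nat \<Rightarrow> 'c trm \<Rightarrow> 'c trm" where
  "lams n t = (Lam ^^ n) t"

definition apps :: "'c trm \<Rightarrow> 'c trm list \<Rightarrow> 'c trm" where
  "apps a ts = foldl App a ts"

definition is_hnf :: "'c \<Rightarrow> 'c trm \<Rightarrow> bool" where
  "is_hnf bt t \<longleftrightarrow> (\<exists>m a ts. good_atom bt a \<and> t = lams m (apps a ts))"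

definition has_hnf :: "'c \<Rightarrow> 'c trm \<Rightarrow> bool" where
  "has_hnf bt t \<longleftrightarrow> (\<exists>t'. beta\<^sup>*\<^sup>* t t' \<and> is_hnf bt t')"

coinductive inf_N :: "'c \<Rightarrow> 'c trm \<Rightarrow> 'c trm \<Rightarrow> bool" for bt :: 'c where
  inf_N_bot: "\<not> has_hnf bt t \<Longrightarrow> inf_N bt t (Con bt)"
| inf_N_hnf: "\<lbrakk> good_atom bt a; head\<^sup>*\<^sup>* t (lams n (apps a ts)); list_all2 (inf_N bt) ts ts' \<rbrakk>
     \<Longrightarrow> inf_N bt t (lams n (apps a ts'))"

end

theory Submission
  imports Defs
begin

text \<open>Head reduction is deterministic and head normal forms are head-irreducible, so the
head normal form reached in the second clause of inf_N is unique: the same number of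
abstractions, the same head atom and the same arguments. A term without hnf cannot take that
clause at all. Hence two results of the same term agree on their top layer and, argumentwise,
are again results of a common term; equality follows by coinduction.\<close>

text \<open>Unlike good_atom this admits Con bt, so that the result Con bt also has the shape
lams 0 (apps a []).\<close>

definition atom :: "'c trm \<Rightarrow> bool" where
  "atom a \<longleftrightarrow> (\<exists>k. a = Var k) \<or> (\<exists>c. a = Con c)"

lemma good_atom_imp_atom: "good_atom bt a \<Longrightarrow> atom a"
  by (auto simp: good_atom_def atom_def)

lemma lams_0 [simp]: "lams 0 x = x"
  by (simp add: lams_def)

lemma lams_Suc: "lams (Suc m) x = Lam (lams m x)"
  by (simp add: lams_def)

lemma apps_Nil [simp]: "apps a [] = a"
  by (simp add: apps_def)

lemma apps_snoc: "apps a (us @ [u]) = App (apps a us) u"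
  by (simp add: apps_def)

lemma apps_neq_Lam: "atom a \<Longrightarrow> apps a ts \<noteq> Lam s"
  by (induct ts rule: rev_induct) (auto simp: atom_def apps_snoc)

lemma apps_inject:
  assumes "atom a" "atom a'" "apps a ts = apps a' ts'"
  shows "a = a' \<and> ts = ts'"
  using assms
proof (induct ts arbitrary: ts' rule: rev_induct)
  case Nil
  then show ?case by (cases ts' rule: rev_exhaust) (auto simp: atom_def apps_snoc)
next
  case (snoc x xs)
  then show ?case by (cases ts' rule: rev_exhaust) (auto simp: atom_def apps_snoc)
qed

lemma lams_apps_inject:
  assumes "atom a" "atom a'" "lams n (apps a ts) = lams n' (apps a' ts')"
  shows "n = n' \<and> a = a' \<and> ts = ts'"
  using assms(3)
proof (induct n arbitrary: n')
  case 0
  then show ?case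
    using apps_inject[OF assms(1,2)] apps_neq_Lam[OF assms(1)] by (cases n') (auto simp: lams_Suc)
next
  case (Suc n)
  then show ?case
    using apps_neq_Lam[OF assms(2), THEN not_sym] by (cases n') (auto simp: lams_Suc)
qed

lemma trm_coinduct_lams_apps:
  assumes "R x y"
    and step: "\<And>x y. R x y \<Longrightarrow> \<exists>n a us vs. atom a \<and> x = lams n (apps a us)
                 \<and> y = lams n (apps a vs) \<and> list_all2 R us vs"
  shows "x = y"
proof -
  define S where "S x y \<longleftrightarrow> (\<exists>n a us vs. atom a \<and> x = lams n (apps a us)
                 \<and> y = lams n (apps a vs) \<and> list_all2 R us vs)" for x y
  have "S x y"
    using step[OF \<open>R x y\<close>] by (simp add: S_def)
  then show ?thesis
  proof (coinduction arbitrary: x y rule: trm.coinduct)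
    case (Eq_trm x y)
    then obtain n a us vs where a: "atom a" and x: "x = lams n (apps a us)"
      and y: "y = lams n (apps a vs)" and args: "list_all2 R us vs"
      by (auto simp: S_def)
    show ?case
    proof (cases n)
      case (Suc m)
      have "S (lams m (apps a us)) (lams m (apps a vs))"
        using a args by (auto simp: S_def)
      then show ?thesis using x y Suc by (simp add: lams_Suc)
    next
      case 0
      show ?thesis
      proof (cases us rule: rev_exhaust)
        case Nil
        then show ?thesis using a args x y 0 by (auto simp: atom_def)
      next
        case (snoc us' u)
        then obtain vs' v where vs: "vs = vs' @ [v]" and "list_all2 R us' vs'" "R u v"
          using args by (cases vs rule: rev_exhaust) (auto simp: list_all2_append1)
        have "S (apps a us') (apps a vs')"
          using a \<open>list_all2 R us' vs'\<close> unfolding S_def by (metis lams_0)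
        moreover have "S u v"
          using step[OF \<open>R u v\<close>] by (simp add: S_def)
        ultimately show ?thesis using x y 0 snoc vs by (simp add: apps_snoc)
      qed
    qed
  qed
qed

lemma rtranclp_normal_form_unique:
  assumes "right_unique r" "r\<^sup>*\<^sup>* t p" "r\<^sup>*\<^sup>* t q" "\<And>y. \<not> r p y" "\<And>y. \<not> r q y"
  shows "p = q"
  using assms(2-5)
proof (induct arbitrary: q rule: converse_rtranclp_induct)
  case base
  from \<open>r\<^sup>*\<^sup>* p q\<close> show ?case
    by (rule converse_rtranclpE) (use base.prems(2) in blast)+
next
  case (step t t')
  from \<open>r\<^sup>*\<^sup>* t q\<close> show ?case
  proof (rule converse_rtranclpE)
    assume "t = q"
    then show ?thesis using step.prems(3) \<open>r t t'\<close> by blast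
  next
    fix t'' assume "r t t''" "r\<^sup>*\<^sup>* t'' q"
    moreover have "t'' = t'"
      using \<open>right_unique r\<close> \<open>r t t'\<close> \<open>r t t''\<close> by (auto dest: right_uniqueD)
    ultimately show ?thesis using step by blast
  qed
qed

inductive_cases whead_LamE [elim!]: "whead (Lam s) u"
inductive_cases whead_AppE: "whead (App s t) u"
inductive_cases head_LamE: "head (Lam s) u"

lemma right_unique_whead: "right_unique whead"
proof (rule right_uniqueI)
  show "whead x y \<Longrightarrow> whead x z \<Longrightarrow> y = z" for x y z :: "'c trm"
  proof (induct arbitrary: z rule: whead.induct)
    case whead_redex
    then show ?case by (blast elim: whead_AppE)
  next
    case (whead_app s s' t)
    from \<open>whead (App s t) z\<close> show ?case
      by (rule whead_AppE) (use whead_app in blast)+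
  qed
qed

lemma right_unique_head: "right_unique head"
proof (rule right_uniqueI)
  show "head x y \<Longrightarrow> head x z \<Longrightarrow> y = z" for x y z :: "'c trm"
  proof (induct arbitrary: z rule: head.induct)
    case (head_w s s')
    from \<open>head s z\<close> show ?case
      by (cases rule: head.cases)
        (use head_w right_unique_whead in \<open>auto dest: right_uniqueD\<close>)
  next
    case (head_lam s s')
    from \<open>head (Lam s) z\<close> show ?case
      by (rule head_LamE) (use head_lam in blast)+
  qed
qed

lemma apps_whead_normal: "atom a \<Longrightarrow> \<not> whead (apps a ts) y"
proof (induct ts arbitrary: y rule: rev_induct)
  case Nil
  then show ?case by (auto simp: atom_def elim: whead.cases)
next
  case (snoc x xs)
  show ?case
  proof
    assume "whead (apps a (xs @ [x])) y"
    then have "whead (App (apps a xs) x) y" by (simp add: apps_snoc)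
    then show False
      by (rule whead_AppE) (simp_all add: apps_neq_Lam[OF snoc(2)] snoc(1)[OF snoc(2)])
  qed
qed

lemma lams_apps_head_normal: "atom a \<Longrightarrow> \<not> head (lams n (apps a ts)) y"
proof (induct n arbitrary: y)
  case 0
  show ?case
  proof
    assume "head (lams 0 (apps a ts)) y"
    then show False
      by (cases rule: head.cases) (simp_all add: apps_whead_normal[OF 0] apps_neq_Lam[OF 0])
  qed
next
  case (Suc n)
  show ?case
  proof
    assume "head (lams (Suc n) (apps a ts)) y"
    then have "head (Lam (lams n (apps a ts))) y" by (simp add: lams_Suc)
    then show False
      by (rule head_LamE) (use Suc.hyps[OF Suc.prems] in blast)+
  qed
qed

lemma head_imp_beta: "head x y \<Longrightarrow> beta x y"
proof (induct rule: head.induct)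
  case (head_w s s')
  then show ?case by (induct rule: whead.induct) (auto intro: beta.intros)
qed (auto intro: beta.intros)

lemma has_hnf_if_head_reduces:
  assumes "good_atom bt a" "head\<^sup>*\<^sup>* t (lams n (apps a ts))"
  shows "has_hnf bt t"
proof -
  have "beta\<^sup>*\<^sup>* t (lams n (apps a ts))"
    using assms(2) by (rule rtranclp_mono[THEN predicate2D, rotated]) (auto intro: head_imp_beta)
  then show ?thesis
    using assms(1) unfolding has_hnf_def is_hnf_def by blast
qed

lemma head_hnf_unique:
  assumes "good_atom bt a" "head\<^sup>*\<^sup>* t (lams n (apps a ts))"
    and "good_atom bt a'" "head\<^sup>*\<^sup>* t (lams n' (apps a' ts'))"
  shows "n = n' \<and> a = a' \<and> ts = ts'"
proof -
  note atoms = assms(1,3)[THEN good_atom_imp_atom]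
  have "lams n (apps a ts) = lams n' (apps a' ts')"
    using rtranclp_normal_form_unique[OF right_unique_head assms(2,4)]
      lams_apps_head_normal atoms by blast
  then show ?thesis using lams_apps_inject atoms by blast
qed

lemma inf_N_common_top:
  assumes "inf_N bt t x" "inf_N bt t y"
  shows "\<exists>n a us vs. atom a \<and> x = lams n (apps a us) \<and> y = lams n (apps a vs)
           \<and> list_all2 (\<lambda>u v. \<exists>t. inf_N bt t u \<and> inf_N bt t v) us vs"
  using assms(1)
proof (cases rule: inf_N.cases)
  case inf_N_bot
  with assms(2) have "y = Con bt"
    by (cases rule: inf_N.cases) (auto dest: has_hnf_if_head_reduces)
  then show ?thesis
    using inf_N_bot by (intro exI[of _ 0] exI[of _ "Con bt"] exI[of _ "[]"]) (auto simp: atom_def)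
next
  case (inf_N_hnf a n ts us)
  note x_hnf = inf_N_hnf
  from assms(2) show ?thesis
  proof (cases rule: inf_N.cases)
    case inf_N_bot
    then show ?thesis using has_hnf_if_head_reduces[OF x_hnf(2,3)] by simp
  next
    case (inf_N_hnf a' n' ts' vs)
    have same: "n = n' \<and> a = a' \<and> ts = ts'"
      using head_hnf_unique[OF x_hnf(2,3) inf_N_hnf(2,3)] .
    have "list_all2 (inf_N bt)\<inverse>\<inverse> us ts"
      using x_hnf(4) by (rule list.rel_flip[THEN iffD2])
    moreover have "list_all2 (inf_N bt) ts vs"
      using inf_N_hnf(4) same by simp
    ultimately have "list_all2 (\<lambda>u v. \<exists>t. inf_N bt t u \<and> inf_N bt t v) us vs"
      by (rule list_all2_trans[rotated]) auto
    then show ?thesis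
      using good_atom_imp_atom[OF x_hnf(2)] x_hnf(1) inf_N_hnf(1) same by blast
  qed
qed

theorem lemma5p38:
  fixes bt :: 'c and t s1 s2 :: "'c trm"
  assumes "inf_N bt t s1" and "inf_N bt t s2"
  shows "s1 = s2"
proof (rule trm_coinduct_lams_apps[where R = "\<lambda>x y. \<exists>t. inf_N bt t x \<and> inf_N bt t y"])
  show "\<exists>t'. inf_N bt t' s1 \<and> inf_N bt t' s2"
    using assms by blast
  show "\<exists>n a us vs. atom a \<and> x = lams n (apps a us) \<and> y = lams n (apps a vs)
          \<and> list_all2 (\<lambda>x y. \<exists>t. inf_N bt t x \<and> inf_N bt t y) us vs"
    if "\<exists>t. inf_N bt t x \<and> inf_N bt t y" for x y
    using that by (elim exE conjE) (rule inf_N_common_top)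
qed

end
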